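(* Consider a neutral evolutionary model on $N$ sites given by a replacement rule $p$ satisfying the fixation assumption described in the context, with replacement probabilities $e_{ij}$, birth rates $b_i$, death rates $d_i$, total birth rate $B>0$, site-specific fixation probabilities $\rho_i$, overall fixation probability $\rho=\frac{1}{B}\sum_{i=1}^N d_i\rho_i$ and molecular clock rate $K=Nu\rho$ (for a mutation probability $u>0$ per reproduction). If the birth rates $b_i$ are constant over all sites $i=1,\ldots,N$, then $\rho\le 1/N$, and consequently $K\le u$, with equality if and only if the death rates $d_i$ are also constant over all sites.
   Context: There are $N$ sites $1,\ldots,N$, each always occupied by one individual of type M (mutant) or R (resident); a state is $\mathbf{s}\in\{\mathrm{M},\mathrm{R}\}^N$. A replacement event is a pair $(R,\alpha)$ with $R\subseteq\{1,\ldots,N\}$ and $\alpha:R\to\{1,\ldots,N\}$. A replacement rule is a probability distribution $p(R,\alpha)$ on replacement events, independent of the state. The evolutionary Markov chain: at each time-step an event $(R,\alpha)$ is drawn with probability $p(R,\alpha)$ and the new state is $s_i'=s_i$ if $i\notin R$, $s_i'=s_{\alpha(i)}$ if $i\in R$. Fixation assumption: there exist a site $i$ and a finite sequence of replacement events, each of positive probability, such that if these events occur consecutively (from any initial state) every site ends up carrying the type initially at site $i$. Define $e_{ij}=\sum_{(R,\alpha):\, j\in R,\ \alpha(j)=i}p(R,\alpha)$, $b_i=\sum_j e_{ij}$, $d_i=\sum_j e_{ji}$, $B=\sum_{i,j}e_{ij}$. The site-specific fixation probability $\rho_i$ is the probability that the chain started from the state with M at site $i$ and R elsewhere is eventually absorbed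 in $(\mathrm{M},\ldots,\mathrm{M})$. *)

theory Defs
  imports "HOL-Probability.Probability"
begin

text \<open>Sites are the elements of a finite type 'a (so N = CARD('a)).
  A state assigns to every site a type; True = M (mutant), False = R (resident).
  A replacement event is a pair (R, alpha) with R a set of sites and alpha a map
  on sites (only its values on R matter).\<close>

type_synonym 'a state = "'a \<Rightarrow> bool"
type_synonym 'a event = "'a set \<times> ('a \<Rightarrow> 'a)"

definition step :: "'a event \<Rightarrow> 'a state \<Rightarrow> 'a state" where
  "step e s = (\<lambda>i. if i \<in> fst e then s (snd e i) else s i)"

definition fixation_assumption :: "'a event pmf \<Rightarrow> bool" where
  "fixation_assumption p \<longleftrightarrow>
     (\<exists>i evs. (\<forall>e\<in>set evs. pmf p e > 0) \<and>
              (\<forall>s. fold step evs s = (\<lambda>_. s i)))"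

definition repl_prob :: "'a event pmf \<Rightarrow> 'a \<Rightarrow> 'a \<Rightarrow> real" where
  "repl_prob p i j = measure_pmf.prob p {e. j \<in> fst e \<and> snd e j = i}"

definition birth_rate :: "'a::finite event pmf \<Rightarrow> 'a \<Rightarrow> real" where
  "birth_rate p i = (\<Sum>j\<in>UNIV. repl_prob p i j)"

definition death_rate :: "'a::finite event pmf \<Rightarrow> 'a \<Rightarrow> real" where
  "death_rate p i = (\<Sum>j\<in>UNIV. repl_prob p j i)"

definition total_birth :: "'a::finite event pmf \<Rightarrow> real" where
  "total_birth p = (\<Sum>i\<in>UNIV. \<Sum>j\<in>UNIV. repl_prob p i j)"

primrec traj :: "'a state \<Rightarrow> 'a event stream \<Rightarrow> nat \<Rightarrow> 'a state" where
  "traj s \<omega> 0 = s"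
| "traj s \<omega> (Suc n) = step (\<omega> !! n) (traj s \<omega> n)"

definition fix_prob_site :: "'a event pmf \<Rightarrow> 'a \<Rightarrow> real" where
  "fix_prob_site p i =
     measure (stream_space (measure_pmf p))
       {\<omega> \<in> space (stream_space (measure_pmf p)).
          \<exists>n. \<forall>m\<ge>n. traj (\<lambda>j. j = i) \<omega> m = (\<lambda>_. True)}"

definition fix_prob :: "'a::finite event pmf \<Rightarrow> real" where
  "fix_prob p = (\<Sum>i\<in>UNIV. death_rate p i * fix_prob_site p i) / total_birth p"

definition clock_rate :: "'a::finite event pmf \<Rightarrow> real \<Rightarrow> real" where
  "clock_rate p u = real CARD('a) * u * fix_prob p"

end

theory Submission
  imports Defs
begin

text \<open>Follow the genealogy backwards: the state after a sequence of events is the initial state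
  composed with the ancestor map, so \<open>\<rho>\<^sub>i\<close> is the probability that the lineage of site \<open>i\<close>
  eventually occupies all sites. These events are disjoint, and the fixation assumption makes
  their union almost sure, so \<open>\<Sum>\<^sub>i \<rho>\<^sub>i = 1\<close>; a first-step analysis gives the balance
  equations \<open>d\<^sub>i \<rho>\<^sub>i = \<Sum>\<^sub>j e\<^sub>i\<^sub>j \<rho>\<^sub>j\<close>.

  For every nonnegative solution of the balance equations the flux
  \<open>\<Sum>\<^sub>i\<^sub>j e\<^sub>i\<^sub>j (\<rho>\<^sub>i - \<rho>\<^sub>j) = \<Sum>\<^sub>i (b\<^sub>i - d\<^sub>i) \<rho>\<^sub>i\<close> is a sum of generalized
  Kullback-Leibler terms \<open>e\<^sub>i\<^sub>j KL(\<rho>\<^sub>j, \<rho>\<^sub>i)\<close>, hence nonnegative, and it vanishes only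
  if \<open>\<rho>\<^sub>i = \<rho>\<^sub>j\<close> whenever \<open>e\<^sub>i\<^sub>j > 0\<close>. With constant birth rates \<open>b\<^sub>i = B/N\<close> the flux
  equals \<open>B (1/N - \<rho>)\<close>. If it vanishes, \<open>\<rho>\<close> is invariant under every possible event, hence
  constant by the fixation assumption, and then the balance equations give \<open>d\<^sub>i = b\<^sub>i\<close>.\<close>

definition parent :: "'a event \<Rightarrow> 'a \<Rightarrow> 'a" where
  "parent e j = (if j \<in> fst e then snd e j else j)"

definition ancestor :: "'a event list \<Rightarrow> 'a \<Rightarrow> 'a" where
  "ancestor evs = foldr (\<lambda>e f. parent e \<circ> f) evs id"

lemma ancestor_Nil [simp]: "ancestor [] = id"
  and ancestor_Cons [simp]: "ancestor (e # evs) = parent e \<circ> ancestor evs"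
  by (simp_all add: ancestor_def)

lemma ancestor_append: "ancestor (xs @ ys) = ancestor xs \<circ> ancestor ys"
  by (induction xs) (simp_all add: comp_assoc)

lemma step_eq_comp_parent: "step e s = s \<circ> parent e"
  by (simp add: step_def parent_def fun_eq_iff)

lemma fold_step_eq_comp_ancestor: "fold step evs s = s \<circ> ancestor evs"
  by (induction evs arbitrary: s) (simp_all add: step_eq_comp_parent comp_assoc)

lemma traj_eq_fold_step: "traj s \<omega> n = fold step (stake n \<omega>) s"
  by (induction n) (simp_all add: stake_Suc del: stake.simps(2))

definition takeover :: "'a \<Rightarrow> 'a event stream set" where
  "takeover i = {\<omega>. \<exists>n. ancestor (stake n \<omega>) = (\<lambda>_. i)}"

lemma ancestor_stake_const_mono:
  assumes "ancestor (stake n \<omega>) = (\<lambda>_. i)" and "n \<le> m"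
  shows "ancestor (stake m \<omega>) = (\<lambda>_. i)"
proof -
  obtain k where "m = n + k" using \<open>n \<le> m\<close> le_Suc_ex by blast
  then show ?thesis
    using assms(1) by (simp flip: stake_add add: ancestor_append comp_def)
qed

lemma takeover_disjoint: "i \<noteq> k \<Longrightarrow> takeover i \<inter> takeover k = {}"
proof (rule ccontr)
  assume "i \<noteq> k" "takeover i \<inter> takeover k \<noteq> {}"
  then obtain \<omega> n m where "ancestor (stake n \<omega>) = (\<lambda>_. i)" "ancestor (stake m \<omega>) = (\<lambda>_. k)"
    by (auto simp: takeover_def)
  then have "ancestor (stake (max n m) \<omega>) = (\<lambda>_. i)" "ancestor (stake (max n m) \<omega>) = (\<lambda>_. k)"
    by (auto intro: ancestor_stake_const_mono)
  with \<open>i \<noteq> k\<close> show False by (simp add: fun_eq_iff)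
qed

lemma Cons_in_takeover: "\<omega> \<in> takeover k \<Longrightarrow> x ## \<omega> \<in> takeover (parent x k)"
  unfolding takeover_def
proof (elim CollectE exE, intro CollectI exI)
  fix n assume "ancestor (stake n \<omega>) = (\<lambda>_. k)"
  then show "ancestor (stake (Suc n) (x ## \<omega>)) = (\<lambda>_. parent x k)"
    by (simp add: comp_def)
qed

lemma traj_fixes_iff:
  "(\<exists>n. \<forall>m\<ge>n. traj (\<lambda>j. j = i) \<omega> m = (\<lambda>_. True)) \<longleftrightarrow> \<omega> \<in> takeover i"
proof -
  have "traj (\<lambda>j. j = i) \<omega> m = (\<lambda>_. True) \<longleftrightarrow> ancestor (stake m \<omega>) = (\<lambda>_. i)" for m
    by (auto simp: traj_eq_fold_step fold_step_eq_comp_ancestor fun_eq_iff)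
  then show ?thesis
    unfolding takeover_def by (blast intro: ancestor_stake_const_mono)
qed

abbreviation iid_streams :: "'b pmf \<Rightarrow> 'b stream measure" where
  "iid_streams p \<equiv> stream_space (measure_pmf p)"

lemma prob_space_iid_streams: "prob_space (iid_streams p)"
  by (rule prob_space.prob_space_stream_space[OF prob_space_measure_pmf])

lemma space_iid_streams [simp]: "space (iid_streams p) = UNIV"
  by (simp add: space_stream_space)

lemma sets_iid_streams_stake:
  "{\<omega>. P (stake n \<omega>)} \<in> sets (iid_streams (p :: 'b::countable pmf))"
proof -
  have "Measurable.pred (stream_space (count_space UNIV)) (\<lambda>\<omega>::'b stream. P (stake n \<omega>))"
    by measurable
  then show ?thesis
    by (simp add: sets_stream_space_cong[of "measure_pmf p" "count_space UNIV"] pred_def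
        space_stream_space)
qed

lemma sets_takeover: "takeover i \<in> sets (iid_streams (p :: ('a::finite) event pmf))"
proof -
  have "takeover i = (\<Union>n. {\<omega>. ancestor (stake n \<omega>) = (\<lambda>_. i)})"
    by (auto simp: takeover_def)
  then show ?thesis
    by (auto intro: sets_iid_streams_stake)
qed

lemma fix_prob_site_eq_measure_takeover:
  "fix_prob_site p i = measure (iid_streams p) (takeover i)"
  by (simp add: fix_prob_site_def traj_fixes_iff)

lemma sets_iid_streams_Cons:
  "A \<in> sets (iid_streams p) \<Longrightarrow> {\<omega>. x ## \<omega> \<in> A} \<in> sets (iid_streams p)"
  using measurable_sets[of "\<lambda>\<omega>. x ## \<omega>" "iid_streams p" "iid_streams p" A]
  by (simp add: vimage_def)

lemma measure_iid_streams_first_step: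
  fixes p :: "'b::finite pmf"
  assumes A: "A \<in> sets (iid_streams p)"
  shows "measure (iid_streams p) A
           = (\<Sum>x\<in>UNIV. pmf p x * measure (iid_streams p) {\<omega>. x ## \<omega> \<in> A})"
proof -
  interpret S: prob_space "iid_streams p" by (rule prob_space_iid_streams)
  have "ennreal (measure (iid_streams p) A)
          = (\<integral>\<^sup>+x. emeasure (iid_streams p) {\<omega>. x ## \<omega> \<in> A} \<partial>measure_pmf p)"
    using prob_space.emeasure_stream_space[OF prob_space_measure_pmf A]
    by (simp add: S.emeasure_eq_measure)
  also have "\<dots> = (\<Sum>x\<in>UNIV. ennreal (pmf p x * measure (iid_streams p) {\<omega>. x ## \<omega> \<in> A}))"
    by (simp add: nn_integral_measure_pmf nn_integral_count_space_finite S.emeasure_eq_measure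
        ennreal_mult mult.commute)
  also have "\<dots> = ennreal (\<Sum>x\<in>UNIV. pmf p x * measure (iid_streams p) {\<omega>. x ## \<omega> \<in> A})"
    by (simp add: sum_ennreal)
  finally show ?thesis
    by (simp add: sum_nonneg)
qed

lemma measure_iid_streams_avoiding_prefix:
  fixes p :: "'b::finite pmf"
  assumes A: "A \<in> sets (iid_streams p)" and tail_closed: "\<And>x \<omega>. x ## \<omega> \<in> A \<Longrightarrow> \<omega> \<in> A"
  shows "B \<in> sets (iid_streams p) \<Longrightarrow> B \<subseteq> A \<Longrightarrow> (\<And>\<omega>. xs @- \<omega> \<notin> B) \<Longrightarrow>
    measure (iid_streams p) B \<le> (1 - prod_list (map (pmf p) xs)) * measure (iid_streams p) A"
proof (induction xs arbitrary: B)
  case Nil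
  then have "B = {}" by auto
  then show ?case by simp
next
  case (Cons y ys)
  interpret S: prob_space "iid_streams p" by (rule prob_space_iid_streams)
  let ?m = "measure (iid_streams p)" and ?q = "prod_list (map (pmf p) ys)"
  have "?m {\<omega>. x ## \<omega> \<in> B} \<le> (if x = y then 1 - ?q else 1) * ?m A" for x
  proof -
    have B_x: "{\<omega>. x ## \<omega> \<in> B} \<in> sets (iid_streams p)" "{\<omega>. x ## \<omega> \<in> B} \<subseteq> A"
      using sets_iid_streams_Cons[OF Cons.prems(1)] Cons.prems(2) tail_closed by auto
    show ?thesis
    proof (cases "x = y")
      case True
      then show ?thesis using Cons.IH[OF B_x] Cons.prems(3) by simp
    next
      case False
      then show ?thesis using S.finite_measure_mono[OF B_x(2) A] by simp
    qed
  qed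
  then have "?m B \<le> (\<Sum>x\<in>UNIV. pmf p x * ((if x = y then 1 - ?q else 1) * ?m A))"
    unfolding measure_iid_streams_first_step[OF Cons.prems(1)]
    by (intro sum_mono mult_left_mono) auto
  also have "\<dots> = (\<Sum>x\<in>UNIV. pmf p x * ?m A - (if x = y then pmf p y * ?q * ?m A else 0))"
    by (rule sum.cong) (auto simp: algebra_simps)
  also have "\<dots> = ?m A - pmf p y * ?q * ?m A"
    by (simp add: sum_subtractf sum_pmf_eq_1 flip: sum_distrib_right)
  finally show ?case by (simp add: algebra_simps)
qed

lemma measure_iid_streams_tail_closed_eq_0:
  fixes p :: "'b::finite pmf"
  assumes A: "A \<in> sets (iid_streams p)" and tail_closed: "\<And>x \<omega>. x ## \<omega> \<in> A \<Longrightarrow> \<omega> \<in> A"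
    and avoids: "\<And>\<omega>. xs @- \<omega> \<notin> A" and pos: "\<forall>x\<in>set xs. pmf p x > 0"
  shows "measure (iid_streams p) A = 0"
proof -
  let ?m = "measure (iid_streams p) A" and ?q = "prod_list (map (pmf p) xs)"
  have "?q > 0"
    using pos by (induction xs) auto
  moreover have "?m \<le> (1 - ?q) * ?m"
    using measure_iid_streams_avoiding_prefix[OF A tail_closed A subset_refl avoids] .
  ultimately have "?m \<le> 0"
    by (simp add: algebra_simps mult_le_0_iff)
  then show ?thesis
    using measure_nonneg[of "iid_streams p" A] by linarith
qed

lemma sum_fix_prob_site:
  fixes p :: "('a::finite) event pmf"
  shows "(\<Sum>k\<in>K. fix_prob_site p k) = measure (iid_streams p) (\<Union>k\<in>K. takeover k)"
proof -
  interpret S: prob_space "iid_streams p" by (rule prob_space_iid_streams)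
  have "disjoint_family_on takeover K"
    unfolding disjoint_family_on_def by (simp add: takeover_disjoint)
  then show ?thesis
    by (simp add: fix_prob_site_eq_measure_takeover S.finite_measure_finite_Union[symmetric]
        sets_takeover image_subset_iff)
qed

lemma sum_fix_prob_site_eq_1:
  fixes p :: "('a::finite) event pmf"
  assumes "fixation_assumption p"
  shows "(\<Sum>i\<in>UNIV. fix_prob_site p i) = 1"
proof -
  interpret S: prob_space "iid_streams p" by (rule prob_space_iid_streams)
  obtain i0 evs where pos: "\<forall>e\<in>set evs. pmf p e > 0" and fixation: "\<forall>s. fold step evs s = (\<lambda>_. s i0)"
    using assms unfolding fixation_assumption_def by blast
  have "ancestor evs = (\<lambda>_. i0)"
    using fixation[rule_format, of "\<lambda>j. j = i0"] by (auto simp: fold_step_eq_comp_ancestor fun_eq_iff)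
  then have avoids: "evs @- \<omega> \<in> takeover i0" for \<omega>
    unfolding takeover_def by (intro CollectI exI[of _ "length evs"]) (simp add: stake_shift)
  let ?U = "\<Union>i. takeover i"
  have U: "?U \<in> sets (iid_streams p)"
    by (intro sets.finite_UN) (simp_all add: sets_takeover)
  have "measure (iid_streams p) (- ?U) = 0"
  proof (rule measure_iid_streams_tail_closed_eq_0[OF _ _ _ pos])
    show "- ?U \<in> sets (iid_streams p)"
      using sets.compl_sets[OF U] by (simp add: Compl_eq_Diff_UNIV)
    show "\<omega> \<in> - ?U" if "x ## \<omega> \<in> - ?U" for x \<omega>
    proof
      assume "\<omega> \<in> ?U"
      then obtain k where "\<omega> \<in> takeover k" by blast
      then have "x ## \<omega> \<in> ?U" by (blast dest: Cons_in_takeover)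
      with that show False by simp
    qed
    show "evs @- \<omega> \<notin> - ?U" for \<omega>
      using avoids[of \<omega>] by auto
  qed
  then show ?thesis
    using S.prob_compl[OF U] sum_fix_prob_site[of p UNIV] by (simp add: Compl_eq_Diff_UNIV)
qed

lemma death_rate_eq_prob:
  fixes p :: "('a::finite) event pmf"
  shows "death_rate p i = measure_pmf.prob p {e. i \<in> fst e}"
proof -
  have "death_rate p i = (\<Sum>j\<in>UNIV. \<Sum>e\<in>{e\<in>{e. i \<in> fst e}. snd e i = j}. pmf p e)"
    unfolding death_rate_def repl_prob_def by (simp add: measure_measure_pmf_finite conj_commute)
  also have "\<dots> = (\<Sum>e\<in>{e. i \<in> fst e}. pmf p e)"
    by (rule sum.group) auto
  finally show ?thesis
    by (simp add: measure_measure_pmf_finite)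
qed

lemma prob_parent_eq:
  fixes p :: "('a::finite) event pmf"
  shows "measure_pmf.prob p {e. parent e k = i}
           = repl_prob p i k + (if k = i then 1 - death_rate p i else 0)"
proof -
  have "{e. parent e k = i} = {e. k \<in> fst e \<and> snd e k = i} \<union> {e. k \<notin> fst e \<and> k = i}"
    by (auto simp: parent_def)
  then have "measure_pmf.prob p {e. parent e k = i}
               = repl_prob p i k + measure_pmf.prob p {e. k \<notin> fst e \<and> k = i}"
    unfolding repl_prob_def by (simp add: measure_pmf.finite_measure_Union disjoint_iff)
  also have "measure_pmf.prob p {e. k \<notin> fst e \<and> k = i} = (if k = i then 1 - death_rate p i else 0)"
    using measure_pmf.prob_compl[of "{e. i \<in> fst e}" p]
    by (simp add: death_rate_eq_prob Compl_eq_Diff_UNIV[symmetric] Compl_eq)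
  finally show ?thesis .
qed

lemma fix_prob_site_ge_first_step:
  fixes p :: "('a::finite) event pmf"
  shows "(\<Sum>k\<in>UNIV. measure_pmf.prob p {e. parent e k = i} * fix_prob_site p k) \<le> fix_prob_site p i"
proof -
  interpret S: prob_space "iid_streams p" by (rule prob_space_iid_streams)
  have "(\<Sum>k\<in>UNIV. measure_pmf.prob p {e. parent e k = i} * fix_prob_site p k)
          = (\<Sum>k\<in>UNIV. \<Sum>e\<in>{e \<in> UNIV. parent e k = i}. pmf p e * fix_prob_site p k)"
    by (simp add: measure_measure_pmf_finite sum_distrib_right)
  also have "\<dots> = (\<Sum>e\<in>UNIV. \<Sum>k\<in>{k \<in> UNIV. parent e k = i}. pmf p e * fix_prob_site p k)"
    by (rule sum.swap_restrict[symmetric]) simp_all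
  also have "\<dots> = (\<Sum>e\<in>UNIV. pmf p e * (\<Sum>k\<in>{k. parent e k = i}. fix_prob_site p k))"
    by (simp add: sum_distrib_left)
  also have "\<dots> \<le> (\<Sum>e\<in>UNIV. pmf p e * measure (iid_streams p) {\<omega>. e ## \<omega> \<in> takeover i})"
  proof (intro sum_mono mult_left_mono)
    fix e
    have "(\<Union>k\<in>{k. parent e k = i}. takeover k) \<subseteq> {\<omega>. e ## \<omega> \<in> takeover i}"
      by (auto dest: Cons_in_takeover[of _ _ e])
    then show "(\<Sum>k\<in>{k. parent e k = i}. fix_prob_site p k) \<le> measure (iid_streams p) {\<omega>. e ## \<omega> \<in> takeover i}"
      unfolding sum_fix_prob_site
      by (intro S.finite_measure_mono sets_iid_streams_Cons sets_takeover)
  qed simp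
  also have "\<dots> = fix_prob_site p i"
    by (simp add: fix_prob_site_eq_measure_takeover measure_iid_streams_first_step[OF sets_takeover])
  finally show ?thesis .
qed

text \<open>The first-step analysis only gives an inequality, because a takeover after the first event
  need not come from a takeover in the remaining stream; summing over all sites shows that
  there is no slack.\<close>
lemma fix_prob_site_balance:
  fixes p :: "('a::finite) event pmf"
  shows "death_rate p i * fix_prob_site p i = (\<Sum>k\<in>UNIV. repl_prob p i k * fix_prob_site p k)"
proof -
  let ?\<rho> = "fix_prob_site p"
  have le: "(\<Sum>k\<in>UNIV. repl_prob p j k * ?\<rho> k) \<le> death_rate p j * ?\<rho> j" for j
  proof -
    have "(\<Sum>k\<in>UNIV. measure_pmf.prob p {e. parent e k = j} * ?\<rho> k)
            = (\<Sum>k\<in>UNIV. repl_prob p j k * ?\<rho> k + (if k = j then (1 - death_rate p j) * ?\<rho> j else 0))"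
      by (rule sum.cong) (simp_all add: prob_parent_eq distrib_right)
    also have "\<dots> = (\<Sum>k\<in>UNIV. repl_prob p j k * ?\<rho> k) + (1 - death_rate p j) * ?\<rho> j"
      by (simp add: sum.distrib)
    finally show ?thesis
      using fix_prob_site_ge_first_step[of p j] by (simp add: algebra_simps)
  qed
  have "(\<Sum>j\<in>UNIV. death_rate p j * ?\<rho> j) = (\<Sum>j\<in>UNIV. \<Sum>k\<in>UNIV. repl_prob p j k * ?\<rho> k)"
    unfolding death_rate_def by (subst sum.swap) (simp add: sum_distrib_right)
  then have "(\<Sum>j\<in>UNIV. death_rate p j * ?\<rho> j - (\<Sum>k\<in>UNIV. repl_prob p j k * ?\<rho> k)) = 0"
    by (simp add: sum_subtractf)
  then show ?thesis
    using le by (simp add: sum_nonneg_eq_0_iff)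
qed

definition kl_term :: "real \<Rightarrow> real \<Rightarrow> real" where
  "kl_term x y = x * (ln x - ln y) - x + y"

lemma kl_term_nonneg_eq_0_iff:
  assumes "0 \<le> x" "0 \<le> y" "y = 0 \<Longrightarrow> x = 0"
  shows "0 \<le> kl_term x y" and "kl_term x y = 0 \<longleftrightarrow> x = y"
proof -
  have "0 \<le> kl_term x y \<and> (kl_term x y = 0 \<longleftrightarrow> x = y)"
  proof (cases "x = 0")
    case True
    then show ?thesis using assms by (simp add: kl_term_def)
  next
    case False
    then have x: "x > 0" and y: "y > 0" using assms by (auto simp: less_le)
    have kl: "kl_term x y = x * ((y / x - 1) - ln (y / x))"
      using x y by (simp add: kl_term_def ln_div field_simps)
    have "ln (y / x) \<le> y / x - 1"
      using x y by (intro ln_le_minus_one) simp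
    moreover have "ln (y / x) = y / x - 1 \<Longrightarrow> x = y"
      using ln_eq_minus_one[of "y / x"] x y by simp
    ultimately show ?thesis
      unfolding kl using x by (auto simp: mult_nonneg_nonneg)
  qed
  then show "0 \<le> kl_term x y" and "kl_term x y = 0 \<longleftrightarrow> x = y" by auto
qed

definition flux :: "('a::finite \<Rightarrow> 'a \<Rightarrow> real) \<Rightarrow> ('a \<Rightarrow> real) \<Rightarrow> real" where
  "flux e \<pi> = (\<Sum>i\<in>UNIV. \<Sum>j\<in>UNIV. e i j * (\<pi> i - \<pi> j))"

lemma flux_eq_sum_out_minus_in:
  "flux e \<pi> = (\<Sum>i\<in>UNIV. ((\<Sum>j\<in>UNIV. e i j) - (\<Sum>j\<in>UNIV. e j i)) * \<pi> i)"
proof -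
  have "(\<Sum>i\<in>UNIV. \<Sum>j\<in>UNIV. e i j * \<pi> j) = (\<Sum>i\<in>UNIV. (\<Sum>j\<in>UNIV. e j i) * \<pi> i)"
    by (subst sum.swap) (simp add: sum_distrib_right)
  then show ?thesis
    by (simp add: flux_def right_diff_distrib left_diff_distrib sum_subtractf sum_distrib_right)
qed

locale balanced_flow =
  fixes e :: "'a::finite \<Rightarrow> 'a \<Rightarrow> real" and \<pi> :: "'a \<Rightarrow> real"
  assumes e_nonneg: "0 \<le> e i j" and \<pi>_nonneg: "0 \<le> \<pi> i"
    and balance: "(\<Sum>j\<in>UNIV. e j i) * \<pi> i = (\<Sum>j\<in>UNIV. e i j * \<pi> j)"
begin

lemma support_closed:
  assumes "0 < e i j" and "\<pi> i = 0"
  shows "\<pi> j = 0"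
proof -
  have "e i j * \<pi> j \<le> (\<Sum>k\<in>UNIV. e i k * \<pi> k)"
    by (rule member_le_sum) (simp_all add: e_nonneg \<pi>_nonneg)
  also have "\<dots> = 0"
    using balance[of i] \<open>\<pi> i = 0\<close> by simp
  finally show ?thesis
    using \<open>0 < e i j\<close> \<pi>_nonneg[of j] by (simp add: mult_le_0_iff)
qed

lemma kl_term_along_edge:
  assumes "0 < e i j"
  shows "0 \<le> kl_term (\<pi> j) (\<pi> i)" and "kl_term (\<pi> j) (\<pi> i) = 0 \<longleftrightarrow> \<pi> i = \<pi> j"
  using kl_term_nonneg_eq_0_iff[OF \<pi>_nonneg \<pi>_nonneg support_closed[OF assms]] by auto

text \<open>The logarithmic terms cancel by the balance equations, since both equal
  \<open>\<Sum>i. d\<^sub>i \<pi>\<^sub>i ln \<pi>\<^sub>i\<close>.\<close>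
lemma flux_eq_sum_kl_term:
  "flux e \<pi> = (\<Sum>i\<in>UNIV. \<Sum>j\<in>UNIV. e i j * kl_term (\<pi> j) (\<pi> i))"
proof -
  have "(\<Sum>i\<in>UNIV. \<Sum>j\<in>UNIV. e i j * \<pi> j * ln (\<pi> i))
          = (\<Sum>i\<in>UNIV. (\<Sum>j\<in>UNIV. e j i) * \<pi> i * ln (\<pi> i))"
    using balance by (simp add: sum_distrib_right flip: sum_distrib_left mult.assoc)
  also have "\<dots> = (\<Sum>i\<in>UNIV. \<Sum>j\<in>UNIV. e i j * \<pi> j * ln (\<pi> j))"
    by (subst sum.swap) (simp add: sum_distrib_right)
  finally have "(\<Sum>i\<in>UNIV. \<Sum>j\<in>UNIV. e i j * \<pi> j * (ln (\<pi> j) - ln (\<pi> i))) = 0"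
    by (simp add: right_diff_distrib sum_subtractf)
  then show ?thesis
    by (simp add: flux_def kl_term_def algebra_simps sum.distrib sum_subtractf)
qed

lemma flux_term_nonneg: "0 \<le> e i j * kl_term (\<pi> j) (\<pi> i)"
proof (cases "e i j = 0")
  case False
  then have "0 < e i j" using e_nonneg[of i j] by simp
  then show ?thesis using kl_term_along_edge(1) by simp
qed simp

lemma flux_nonneg: "0 \<le> flux e \<pi>"
  unfolding flux_eq_sum_kl_term by (intro sum_nonneg flux_term_nonneg)

lemma flux_eq_0_imp_eq:
  assumes "flux e \<pi> = 0" and "0 < e i j"
  shows "\<pi> i = \<pi> j"
proof -
  have "e i j * kl_term (\<pi> j) (\<pi> i) = 0"
    using assms(1) unfolding flux_eq_sum_kl_term
    by (simp add: sum_nonneg_eq_0_iff sum_nonneg flux_term_nonneg)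
  then show ?thesis
    using assms(2) kl_term_along_edge(2)[OF assms(2)] by simp
qed

end

lemma repl_prob_pos: "0 < pmf p e \<Longrightarrow> k \<in> fst e \<Longrightarrow> 0 < repl_prob p (snd e k) k"
  unfolding repl_prob_def by (rule measure_pmf_posI) (auto simp: set_pmf_iff)

lemma fixation_assumption_invariant_const:
  assumes "fixation_assumption p" and "\<And>e. 0 < pmf p e \<Longrightarrow> step e s = s"
  shows "s i = s j"
proof -
  obtain i0 evs where pos: "\<forall>e\<in>set evs. pmf p e > 0" and fixation: "\<forall>s. fold step evs s = (\<lambda>_. s i0)"
    using assms(1) unfolding fixation_assumption_def by blast
  from pos have "fold step evs s = s"
    by (induction evs) (simp_all add: assms(2))
  then show ?thesis
    using fixation by metis
qed

lemma balanced_flow_fix_prob_site: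
  fixes p :: "('a::finite) event pmf"
  shows "balanced_flow (repl_prob p) (fix_prob_site p)"
proof unfold_locales
  show "0 \<le> repl_prob p i j" for i j
    by (simp add: repl_prob_def)
  show "0 \<le> fix_prob_site p i" for i
    by (simp add: fix_prob_site_def)
  show "(\<Sum>j\<in>UNIV. repl_prob p j i) * fix_prob_site p i = (\<Sum>j\<in>UNIV. repl_prob p i j * fix_prob_site p j)" for i
    using fix_prob_site_balance[of p i] by (simp add: death_rate_def)
qed

lemma total_birth_eq_sum_death_rate:
  fixes p :: "('a::finite) event pmf"
  shows "total_birth p = (\<Sum>i\<in>UNIV. death_rate p i)"
  unfolding total_birth_def death_rate_def by (rule sum.swap)

lemma fix_prob_deficit:
  fixes p :: "('a::finite) event pmf"
  assumes "fixation_assumption p" and "total_birth p > 0" and "\<And>i. birth_rate p i = c"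
  shows "1 / real CARD('a) - fix_prob p = flux (repl_prob p) (fix_prob_site p) / total_birth p"
proof -
  have total: "total_birth p = real CARD('a) * c"
    using assms(3) by (simp add: total_birth_def flip: birth_rate_def)
  have "flux (repl_prob p) (fix_prob_site p) = c - (\<Sum>i\<in>UNIV. death_rate p i * fix_prob_site p i)"
    using sum_fix_prob_site_eq_1[OF assms(1)]
    by (simp add: flux_eq_sum_out_minus_in left_diff_distrib sum_subtractf assms(3)
        flip: birth_rate_def death_rate_def sum_distrib_left)
  moreover have "0 < c"
    using assms(2) total by (simp add: zero_less_mult_iff)
  ultimately show ?thesis
    unfolding fix_prob_def total by (simp add: field_simps)
qed

lemma flux_fix_prob_site_eq_0_iff:
  fixes p :: "('a::finite) event pmf"
  assumes "fixation_assumption p" and birth: "\<And>i. birth_rate p i = c"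
  shows "flux (repl_prob p) (fix_prob_site p) = 0 \<longleftrightarrow> (\<exists>d. \<forall>i. death_rate p i = d)"
proof
  interpret balanced_flow "repl_prob p" "fix_prob_site p"
    by (rule balanced_flow_fix_prob_site)
  assume flux_0: "flux (repl_prob p) (fix_prob_site p) = 0"
  have "step e (\<lambda>k. fix_prob_site p k = fix_prob_site p i) = (\<lambda>k. fix_prob_site p k = fix_prob_site p i)"
    if "0 < pmf p e" for e i
    using flux_eq_0_imp_eq[OF flux_0 repl_prob_pos[OF that]] by (auto simp: step_def fun_eq_iff)
  then have const: "fix_prob_site p k = fix_prob_site p i" for i k
    using fixation_assumption_invariant_const[OF assms(1), of "\<lambda>k. fix_prob_site p k = fix_prob_site p i" k i]
    by simp
  have "fix_prob_site p i \<noteq> 0" for i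
    using sum_fix_prob_site_eq_1[OF assms(1)] const[of i] by auto
  moreover have "death_rate p i * fix_prob_site p i = c * fix_prob_site p i" for i
  proof -
    have "death_rate p i * fix_prob_site p i = (\<Sum>k\<in>UNIV. repl_prob p i k * fix_prob_site p i)"
      unfolding fix_prob_site_balance using const[where i=i] by (intro sum.cong) simp_all
    also have "\<dots> = c * fix_prob_site p i"
      using birth[of i] by (simp add: birth_rate_def flip: sum_distrib_right)
    finally show ?thesis .
  qed
  ultimately show "\<exists>d. \<forall>i. death_rate p i = d"
    by auto
next
  assume "\<exists>d. \<forall>i. death_rate p i = d"
  then obtain d where death: "\<And>i. death_rate p i = d" by blast
  have "real CARD('a) * d = real CARD('a) * c"
    using total_birth_eq_sum_death_rate[of p] birth by (simp add: death total_birth_def flip: birth_rate_def)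
  then have "death_rate p i = birth_rate p i" for i
    by (simp add: death birth)
  then show "flux (repl_prob p) (fix_prob_site p) = 0"
    by (simp add: flux_eq_sum_out_minus_in flip: birth_rate_def death_rate_def)
qed

theorem mainTheorem3:
  fixes p :: "('a::finite) event pmf" and u :: real
  assumes "fixation_assumption p"
    and "total_birth p > 0"
    and "u > 0"
    and "\<exists>c. \<forall>i. birth_rate p i = c"
  shows "fix_prob p \<le> 1 / real CARD('a)
         \<and> clock_rate p u \<le> u
         \<and> (fix_prob p = 1 / real CARD('a) \<longleftrightarrow> (\<exists>c. \<forall>i. death_rate p i = c))
         \<and> (clock_rate p u = u \<longleftrightarrow> (\<exists>c. \<forall>i. death_rate p i = c))"
proof -
  obtain c where birth: "\<And>i. birth_rate p i = c"
    using assms(4) by blast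
  interpret balanced_flow "repl_prob p" "fix_prob_site p"
    by (rule balanced_flow_fix_prob_site)
  have deficit: "1 / real CARD('a) - fix_prob p = flux (repl_prob p) (fix_prob_site p) / total_birth p"
    by (rule fix_prob_deficit[OF assms(1,2) birth])
  have fix_le: "fix_prob p \<le> 1 / real CARD('a)"
    using deficit flux_nonneg assms(2) by (smt (verit) divide_nonneg_pos)
  have fix_eq: "fix_prob p = 1 / real CARD('a) \<longleftrightarrow> (\<exists>c. \<forall>i. death_rate p i = c)"
    using deficit assms(2) flux_fix_prob_site_eq_0_iff[OF assms(1) birth] by auto
  have "clock_rate p u = u * (real CARD('a) * fix_prob p)"
    by (simp add: clock_rate_def)
  moreover have "real CARD('a) * fix_prob p \<le> 1"
    and "real CARD('a) * fix_prob p = 1 \<longleftrightarrow> fix_prob p = 1 / real CARD('a)"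
    using fix_le by (auto simp: field_simps)
  ultimately show ?thesis
    using fix_le fix_eq assms(3) by auto
qed

end
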